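(* Let $\rho=3-2\sqrt2$, let $g$, $b_0,b_1,b_2$ be as in the context, let $B(x)=b_0+b_1x+b_2x^2$, and fix $\varphi\in(0,\pi)$. For $n\ge1$ let $\mathcal{S}(n)=\{\rho+(\rho/n)e^{i\theta}:\varphi\le|\theta|\le\pi\}$, an arc of the circle $|z-\rho|=\rho/n$ (with either orientation). Then for all integers $n\ge5$, \[\left|\frac{1}{2\pi i}\int_{\mathcal{S}(n)}\frac{g(z)}{z^{n+1}}\,dz\right|\le\rho^{-n}n^2\,\frac{4}{\rho^3}\,B(\pi+\log n).\]
   Context: Let $(d_n)_{n\ge0}$ be the rational sequence with $(d_0,\dots,d_6)=(72,1932,31248,\frac{790101}{2},\frac{17208645}{4},\frac{338898609}{8},\frac{1551478257}{4})$ satisfying $\sum_{k=0}^7 r_k(n)d_{n+k}=0$ for all $n\ge0$, where $r_0(n) = -(n+8)(n+7)(n+6)^2(12232n^3+298144n^2+2412586n+6469077)$, $r_1(n) = (n+8)(183480n^6+7655560n^5+131977142n^4+1202876299n^3+6112196895n^2+16418149668n+18219511026)$, $r_2(n) = -(n+8)(941864n^6+38326904n^5+644300514n^4+5727711699n^3+28407144241n^2+74557779538n+80949464718)$, $r_3(n) = 1993816n^7+97303624n^6+2021855198n^5+23184921987n^4+158457515673n^3+645518710454n^2+1451619424860n+1390493835900$, $r_4(n) = -1993816n^7-98090344n^6-2054897438n^5-23758375953n^4-163720428321n^3-672459054524n^2-1524577250976n-1472211879228$, $r_5(n) = (n+6)(941864n^6+40789672n^5+730497394n^4+6921881565n^3+36590122947n^2+102300885158n+118218544398)$,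 $r_6(n) = (n+6)(183480n^6+7756760n^5+135519142n^4+1252328453n^3+6456460129n^2+17612930492n+19872693550)$, $r_7(n) = (n+7)(n+6)(n+8)^2(12232n^3+215600n^2+1256970n+2435511)$. Let $f(z)=\sum_{n\ge0}d_nz^n$; it extends analytically to $\Delta=\{z:|z|<1\}\setminus[\rho,1]$. With the principal branch of $\log$ and $L(z)=\log\frac{1}{1-z/\rho}$, on $\Delta\cap\{|z-\rho|<\rho\}$ one has the unique decomposition $f(z)=C_1(z-\rho)^{-4}+C_2(z-\rho)^{-4}L(z)+(z-\rho)^{-3}(h_0(z)+h_1(z)L(z)+h_2(z)L(z)^2)$ with real constants $C_1,C_2$ and $h_0,h_1,h_2$ analytic on $|z-\rho|<\rho$. Let $\ell(z)=C_1(z-\rho)^{-4}+C_2(z-\rho)^{-4}L(z)$ and $g=f-\ell$. The constants $b_0\in[6.86\pm2.71\cdot10^{-4}]$, $b_1\in[2.85\pm3.20\cdot10^{-3}]$, $b_2\in[0.309\pm2.78\cdot10^{-4}]$ (where $[x\pm\epsilon]$ denotes $[x-\epsilon,x+\epsilon]$) satisfy $|h_j(z)|\le b_j$ for $j=0,1,2$ and all $|z-\rho|<1/8$. *)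

theory Defs
  imports "HOL-Complex_Analysis.Complex_Analysis"
begin

definition rho :: real where "rho = 3 - 2 * sqrt 2"

fun rcoef :: "nat \<Rightarrow> real \<Rightarrow> real" where
  "rcoef 0 n = -(n+8)*(n+7)*(n+6)^2*(12232*n^3+298144*n^2+2412586*n+6469077)"
| "rcoef (Suc 0) n = (n+8)*(183480*n^6+7655560*n^5+131977142*n^4+1202876299*n^3+6112196895*n^2+16418149668*n+18219511026)"
| "rcoef (Suc (Suc 0)) n = -(n+8)*(941864*n^6+38326904*n^5+644300514*n^4+5727711699*n^3+28407144241*n^2+74557779538*n+80949464718)"
| "rcoef (Suc (Suc (Suc 0))) n = 1993816*n^7+97303624*n^6+2021855198*n^5+23184921987*n^4+158457515673*n^3+645518710454*n^2+1451619424860*n+1390493835900"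
| "rcoef (Suc (Suc (Suc (Suc 0)))) n = -1993816*n^7-98090344*n^6-2054897438*n^5-23758375953*n^4-163720428321*n^3-672459054524*n^2-1524577250976*n-1472211879228"
| "rcoef (Suc (Suc (Suc (Suc (Suc 0))))) n = (n+6)*(941864*n^6+40789672*n^5+730497394*n^4+6921881565*n^3+36590122947*n^2+102300885158*n+118218544398)"
| "rcoef (Suc (Suc (Suc (Suc (Suc (Suc 0)))))) n = (n+6)*(183480*n^6+7756760*n^5+135519142*n^4+1252328453*n^3+6456460129*n^2+17612930492*n+19872693550)"
| "rcoef (Suc (Suc (Suc (Suc (Suc (Suc (Suc 0))))))) n = (n+7)*(n+6)*(n+8)^2*(12232*n^3+215600*n^2+1256970*n+2435511)"
| "rcoef _ n = 0"

definition Delta :: "complex set" where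
  "Delta = ball 0 1 - closed_segment (complex_of_real rho) 1"

definition Lfun :: "complex \<Rightarrow> complex" where
  "Lfun z = Ln (1 / (1 - z / complex_of_real rho))"

definition Bpoly :: "real \<Rightarrow> real \<Rightarrow> real \<Rightarrow> real \<Rightarrow> real" where
  "Bpoly b0 b1 b2 x = b0 + b1 * x + b2 * x^2"

end

theory Submission
  imports Defs
begin

text \<open>On the circle \<open>|z - \<rho>| = \<rho>/n\<close> with \<open>n \<ge> 5\<close> the arc \<open>S(n)\<close> lies in \<open>\<Delta>\<close>, inside the disc
  where the bounds \<open>|h\<^sub>j| \<le> b\<^sub>j\<close> hold, so \<open>g = (h\<^sub>0 + h\<^sub>1 L + h\<^sub>2 L\<^sup>2) / (z - \<rho>)\<^sup>3\<close> there.
  Since \<open>|1/(1 - z/\<rho>)| = n\<close>, we get \<open>|L(z)| \<le> ln n + \<pi>\<close>, and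
  \<open>|z|\<^bsup>n+1\<^esup> \<ge> (\<rho>(1 - 1/n))\<^bsup>n+1\<^esup> \<ge> \<rho>\<^bsup>n+1\<^esup>/4\<close>. Multiplying the resulting maximum of
  \<open>|g(z)/z\<^bsup>n+1\<^esup>|\<close> by the arc length, at most \<open>2\<pi>\<rho>/n\<close>, gives the bound. The recurrence, the
  power series and the numerical values of the \<open>b\<^sub>j\<close> play no role.\<close>

lemma rho_bounds: "0 < rho" "rho < 1/5"
proof -
  have "1.4 < sqrt (2::real)"
    by (rule real_less_rsqrt) (simp add: power2_eq_square)
  moreover have "sqrt (2::real) < 1.5"
    by (rule real_less_lsqrt) (simp_all add: power2_eq_square)
  ultimately show "0 < rho" "rho < 1/5"
    unfolding rho_def by auto
qed

lemma one_minus_inverse_power_ge_quarter: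
  fixes n :: nat
  assumes "5 \<le> n"
  shows "1/4 \<le> (1 - 1 / real n) ^ (n + 1)"
proof -
  txt \<open>For \<open>n = 5, 6\<close> the inequality is checked numerically; for \<open>n \<ge> 7\<close> we use
    \<open>(1 + 1/(n-1))\<^bsup>n+1\<^esup> \<le> e\<^bsup>(n+1)/(n-1)\<^esup> \<le> e\<^bsup>4/3\<^esup> \<le> 4\<close>.\<close>
  consider "n = 5" | "n = 6" | "7 \<le> n"
    using assms by linarith
  then show ?thesis
  proof cases
    case 3
    then have n7: "7 \<le> real n" by simp
    have "(real n / (real n - 1)) ^ (n + 1) = (1 + 1 / (real n - 1)) ^ (n + 1)"
      using n7 by (simp add: field_simps)
    also have "\<dots> \<le> exp (1 / (real n - 1)) ^ (n + 1)"
      using n7 by (intro power_mono exp_ge_add_one_self) simp_all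
    also have "\<dots> = exp (real (n + 1) * (1 / (real n - 1)))"
      by (rule exp_of_nat_mult[symmetric])
    also have "\<dots> \<le> exp (2 * ln 2)"
    proof -
      have "real (n + 1) * (1 / (real n - 1)) \<le> 4/3"
        using n7 by (simp add: field_simps)
      then show ?thesis
        using ln2_ge_two_thirds by (subst exp_le_cancel_iff) linarith
    qed
    also have "\<dots> = 4"
      using exp_of_nat_mult[of 2 "ln (2::real)"] by simp
    finally have "(real n / (real n - 1)) ^ (n + 1) \<le> 4" .
    moreover have "1 - 1 / real n = inverse (real n / (real n - 1))"
      using n7 by (simp add: field_simps)
    ultimately show ?thesis
      using n7 by (simp add: power_inverse field_simps)
  qed (simp_all add: power_divide)
qed

lemma norm_Ln_le: "w \<noteq> 0 \<Longrightarrow> norm (Ln w) \<le> \<bar>ln (norm w)\<bar> + pi"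
  using cmod_le[of "Ln w"] mpi_less_Im_Ln[of w] Im_Ln_le_pi[of w] by simp

lemma norm_Lfun_le:
  assumes "z \<noteq> complex_of_real rho"
  shows "norm (Lfun z) \<le> \<bar>ln (rho / norm (z - complex_of_real rho))\<bar> + pi"
proof -
  have "1 / (1 - z / complex_of_real rho) = complex_of_real rho / (complex_of_real rho - z)"
    using rho_bounds(1) by (simp add: field_simps)
  then have "norm (1 / (1 - z / complex_of_real rho)) = rho / norm (z - complex_of_real rho)"
    using rho_bounds(1) by (simp add: norm_divide norm_minus_commute)
  moreover have "1 / (1 - z / complex_of_real rho) \<noteq> 0"
    using assms rho_bounds(1) by (simp add: field_simps)
  ultimately show ?thesis
    unfolding Lfun_def using norm_Ln_le by metis
qed

lemma real_point_notin_Delta: "rho \<le> x \<Longrightarrow> complex_of_real x \<notin> Delta"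
  by (auto simp: Delta_def closed_segment_of_real[of rho 1, simplified] closed_segment_eq_real_ivl)

text \<open>The argument \<open>1/(1 - z/\<rho>)\<close> of \<open>Ln\<close> is a nonpositive real only for real \<open>z \<ge> \<rho>\<close>
  (\<open>z = \<rho>\<close> included, where HOL's \<open>1/0 = 0\<close>), and \<open>\<Delta>\<close> contains no such point.\<close>

lemma Lfun_holomorphic_on_Delta: "Lfun holomorphic_on Delta"
proof -
  have "1 / (1 - z / complex_of_real rho) \<notin> \<real>\<^sub>\<le>\<^sub>0" if "z \<in> Delta" for z
  proof
    assume "1 / (1 - z / complex_of_real rho) \<in> \<real>\<^sub>\<le>\<^sub>0"
    then obtain t where t: "t \<le> 0" "1 / (1 - z / complex_of_real rho) = complex_of_real t"
      by (auto elim: nonpos_Reals_cases)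
    have "t \<noteq> 0"
      using t(2) rho_bounds(1) \<open>z \<in> Delta\<close> real_point_notin_Delta[of rho]
      by (auto simp: field_simps)
    then have "complex_of_real t * (1 - z / complex_of_real rho) = 1"
      using t(2) by (auto simp: divide_eq_eq split: if_splits)
    then have "z = complex_of_real (rho - rho / t)"
      using \<open>t \<noteq> 0\<close> rho_bounds(1) by (simp add: field_simps)
    moreover have "rho \<le> rho - rho / t"
      using t(1) rho_bounds(1) by (simp add: divide_nonneg_nonpos)
    ultimately show False
      using real_point_notin_Delta that by blast
  qed
  moreover have "complex_of_real rho \<notin> Delta"
    by (simp add: real_point_notin_Delta)
  ultimately show ?thesis
    unfolding Lfun_def by (auto intro!: holomorphic_intros)
qed

lemma circle_point_in_Delta:
  assumes "0 < r" "rho + r < 1" "0 < \<theta>" "\<theta> < 2 * pi"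
  shows "complex_of_real rho + complex_of_real r * cis \<theta> \<in> Delta"
    (is "?z \<in> Delta")
proof -
  have "norm ?z \<le> rho + r"
    using norm_triangle_ineq[of "complex_of_real rho" "complex_of_real r * cis \<theta>"]
      rho_bounds(1) assms(1) by (simp add: norm_mult)
  then have "?z \<in> ball 0 1"
    using assms(2) by simp
  moreover have "?z \<notin> closed_segment (complex_of_real rho) 1"
  proof
    assume "?z \<in> closed_segment (complex_of_real rho) 1"
    then obtain x where x: "rho \<le> x" "?z = complex_of_real x"
      using rho_bounds by (auto simp: closed_segment_of_real[of rho 1, simplified]
          closed_segment_eq_real_ivl)
    have "r * sin \<theta> = Im ?z"
      by simp
    also have "\<dots> = 0"
      using x(2) by simp
    finally have "sin (\<theta> - pi) = 0"
      using assms(1) by (simp add: sin_diff)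
    then have "\<theta> = pi"
      using sin_eq_0_pi[of "\<theta> - pi"] assms(3,4) by simp
    then have "Re ?z < rho"
      using assms(1) by simp
    then show False
      using x by simp
  qed
  ultimately show ?thesis
    unfolding Delta_def by simp
qed

lemma singular_part_holomorphic_on_Delta:
  "(\<lambda>z. a / (z - complex_of_real rho) ^ 4 + b / (z - complex_of_real rho) ^ 4 * Lfun z)
    holomorphic_on Delta"
  using Lfun_holomorphic_on_Delta real_point_notin_Delta[of rho] by (auto intro!: holomorphic_intros)

lemma path_image_small_arc_subset:
  fixes n :: nat
  assumes "0 < \<phi>" "\<phi> < pi" "5 \<le> n"
  shows "path_image (part_circlepath (complex_of_real rho) (rho / real n) \<phi> (2 * pi - \<phi>))
    \<subseteq> (Delta - {0}) \<inter> ball (complex_of_real rho) rho \<inter> ball (complex_of_real rho) (1/8)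
      \<inter> sphere (complex_of_real rho) (rho / real n)"
    (is "?arc \<subseteq> _")
proof -
  define r where "r = rho / real n"
  have "r \<le> rho / 5"
    unfolding r_def using rho_bounds(1) assms(3) by (intro divide_left_mono) auto
  moreover have "0 < r"
    unfolding r_def using rho_bounds(1) assms(3) by simp
  ultimately have r: "0 < r" "r < rho" "r < 1/8" "rho + r < 1"
    using rho_bounds by auto
  let ?arc_r = "path_image (part_circlepath (complex_of_real rho) r \<phi> (2 * pi - \<phi>))"
  have "?arc_r \<subseteq> Delta"
    using assms(1,2) r
    by (auto simp: path_image_part_circlepath' closed_segment_eq_real_ivl
        intro!: circle_point_in_Delta)
  moreover have "?arc_r \<subseteq> sphere (complex_of_real rho) r"
    using assms(1,2) r(1) by (intro path_image_part_circlepath_subset) auto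
  ultimately show ?thesis
    using r unfolding r_def by fastforce
qed

lemma norm_contour_integral_part_circlepath_le:
  fixes F :: "complex \<Rightarrow> complex"
  assumes cont: "continuous_on (path_image (part_circlepath c r s t)) F"
    and "s \<le> t" "t - s \<le> 2 * pi" "0 < r"
    and bound: "\<And>z. z \<in> path_image (part_circlepath c r s t) \<Longrightarrow> norm (F z) \<le> M"
    and \<gamma>: "\<gamma> \<in> {part_circlepath c r s t, part_circlepath c r t s}"
  shows "F contour_integrable_on \<gamma>
    \<and> norm (contour_integral \<gamma> F / (2 * complex_of_real pi * \<i>)) \<le> M * r"
proof -
  have int: "F contour_integrable_on part_circlepath c r s t"
    using cont by (rule contour_integrable_continuous_part_circlepath)
  have "0 \<le> M"
    using bound[OF pathstart_in_path_image] norm_ge_zero order_trans by blast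
  then have "norm (contour_integral (part_circlepath c r s t) F) \<le> M * r * (t - s)"
    using has_contour_integral_integral[OF int] assms(2,4) bound
    by (intro has_contour_integral_bound_part_circlepath)
  also have "\<dots> \<le> M * r * (2 * pi)"
    using \<open>0 \<le> M\<close> assms(3,4) by (intro mult_left_mono) auto
  finally have "norm (contour_integral \<gamma> F) \<le> M * r * (2 * pi)"
    using \<gamma> contour_integral_part_circlepath_reverse[of c r t s F] by auto
  then have "norm (contour_integral \<gamma> F / (2 * complex_of_real pi * \<i>)) \<le> M * r"
    by (simp add: norm_divide norm_mult pos_divide_le_eq)
  moreover have "F contour_integrable_on part_circlepath c r t s"
    using int contour_integrable_reversepath[of "part_circlepath c r s t"] by simp
  ultimately show ?thesis
    using \<gamma> int by auto
qed

lemma norm_quadratic_le_Bpoly: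
  fixes a0 a1 a2 w :: "'a :: real_normed_field"
  assumes "norm a0 \<le> b0" "norm a1 \<le> b1" "norm a2 \<le> b2" "norm w \<le> x"
  shows "norm (a0 + a1 * w + a2 * w ^ 2) \<le> Bpoly b0 b1 b2 x"
proof -
  have "norm (a0 + a1 * w + a2 * w ^ 2) \<le> norm a0 + norm (a1 * w) + norm (a2 * w ^ 2)"
    using norm_triangle_ineq[of "a0 + a1 * w" "a2 * w ^ 2"] norm_triangle_ineq[of a0 "a1 * w"]
    by linarith
  also have "\<dots> = norm a0 + norm a1 * norm w + norm a2 * norm w ^ 2"
    by (simp add: norm_mult norm_power)
  also have "\<dots> \<le> b0 + b1 * x + b2 * x ^ 2"
  proof -
    have "0 \<le> norm w" "0 \<le> b1" "0 \<le> b2"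
      using assms norm_ge_zero[of a1] norm_ge_zero[of a2] norm_ge_zero[of w] by linarith+
    then have "norm a1 * norm w \<le> b1 * x" "norm a2 * norm w ^ 2 \<le> b2 * x ^ 2"
      using assms by (auto intro!: mult_mono power_mono)
    then show ?thesis
      using assms(1) by linarith
  qed
  finally show ?thesis
    unfolding Bpoly_def .
qed

lemma norm_power_ge_on_small_circle:
  fixes c z :: complex and n :: nat
  assumes "5 \<le> n" "norm (z - c) = norm c / real n"
  shows "norm c ^ (n + 1) / 4 \<le> norm (z ^ (n + 1))"
proof -
  have "norm c ^ (n + 1) / 4 \<le> norm c ^ (n + 1) * (1 - 1 / real n) ^ (n + 1)"
    using mult_left_mono[OF one_minus_inverse_power_ge_quarter[OF assms(1)], of "norm c ^ (n + 1)"]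
    by simp
  also have "\<dots> = (norm c * (1 - 1 / real n)) ^ (n + 1)"
    by (simp add: power_mult_distrib)
  also have "\<dots> \<le> norm z ^ (n + 1)"
  proof (rule power_mono)
    show "norm c * (1 - 1 / real n) \<le> norm z"
      using norm_triangle_ineq2[of c "c - z"] assms(2)
      by (simp add: norm_minus_commute algebra_simps)
    show "0 \<le> norm c * (1 - 1 / real n)"
      using assms(1) by simp
  qed
  finally show ?thesis
    by (simp only: norm_power)
qed

lemma norm_Lfun_quadratic_quotient_le:
  fixes n :: nat and z a0 a1 a2 :: complex
  assumes n: "5 \<le> n" and z: "norm (z - complex_of_real rho) = rho / real n"
    and a: "norm a0 \<le> b0" "norm a1 \<le> b1" "norm a2 \<le> b2"
  shows "norm ((a0 + a1 * Lfun z + a2 * Lfun z ^ 2) / (z - complex_of_real rho) ^ 3 / z ^ (n + 1))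
    \<le> 4 * real n ^ 3 / rho ^ (n + 4) * Bpoly b0 b1 b2 (pi + ln (real n))"
proof -
  define B where "B = Bpoly b0 b1 b2 (pi + ln (real n))"
  have rho_n: "0 < rho / real n"
    using rho_bounds(1) n by simp
  have "z \<noteq> complex_of_real rho"
    using z rho_n by auto
  then have "norm (Lfun z) \<le> \<bar>ln (rho / (rho / real n))\<bar> + pi"
    using norm_Lfun_le[of z] z by simp
  also have "\<dots> = pi + ln (real n)"
    using rho_bounds(1) n by simp
  finally have num: "norm (a0 + a1 * Lfun z + a2 * Lfun z ^ 2) \<le> B"
    unfolding B_def using a by (intro norm_quadratic_le_Bpoly)
  have den: "rho ^ (n + 1) / 4 \<le> norm (z ^ (n + 1))"
    using norm_power_ge_on_small_circle[OF n, of z "complex_of_real rho"] z rho_bounds(1) by simp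
  have "norm ((a0 + a1 * Lfun z + a2 * Lfun z ^ 2) / (z - complex_of_real rho) ^ 3 / z ^ (n + 1))
      = norm (a0 + a1 * Lfun z + a2 * Lfun z ^ 2) / (rho / real n) ^ 3 / norm (z ^ (n + 1))"
    by (simp only: norm_divide norm_power z)
  also have "\<dots> \<le> B / (rho / real n) ^ 3 / (rho ^ (n + 1) / 4)"
    using num den rho_n rho_bounds(1) norm_ge_zero order_trans
    by (intro divide_mono) (auto intro: divide_nonneg_pos)
  also have "\<dots> = 4 * real n ^ 3 / rho ^ (n + 4) * B"
    using rho_bounds(1) n by (simp add: field_simps power_add eval_nat_numeral)
  finally show ?thesis
    unfolding B_def .
qed

theorem proposition3p7:
  fixes d :: "nat \<Rightarrow> real"
    and f g h0 h1 h2 :: "complex \<Rightarrow> complex"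
    and C1 C2 b0 b1 b2 :: real
  assumes d_init: "d 0 = 72" "d 1 = 1932" "d 2 = 31248" "d 3 = 790101 / 2"
      "d 4 = 17208645 / 4" "d 5 = 338898609 / 8" "d 6 = 1551478257 / 4"
    and d_rec: "\<forall>n. (\<Sum>k\<le>7. rcoef k (real n) * d (n + k)) = 0"
    and f_holo: "f holomorphic_on Delta"
    and f_series: "\<exists>r>0. \<forall>z\<in>ball 0 r. (\<lambda>n. complex_of_real (d n) * z ^ n) sums f z"
    and h_holo: "h0 holomorphic_on ball (complex_of_real rho) rho"
      "h1 holomorphic_on ball (complex_of_real rho) rho"
      "h2 holomorphic_on ball (complex_of_real rho) rho"
    and decomp: "\<forall>z\<in>Delta \<inter> ball (complex_of_real rho) rho.
       f z = complex_of_real C1 / (z - complex_of_real rho) ^ 4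
           + complex_of_real C2 / (z - complex_of_real rho) ^ 4 * Lfun z
           + (h0 z + h1 z * Lfun z + h2 z * (Lfun z)^2) / (z - complex_of_real rho) ^ 3"
    and g_def: "\<forall>z. g z = f z - (complex_of_real C1 / (z - complex_of_real rho) ^ 4
           + complex_of_real C2 / (z - complex_of_real rho) ^ 4 * Lfun z)"
    and b_int: "b0 \<in> {6.86 - 2.71 / 10^4 .. 6.86 + 2.71 / 10^4}"
      "b1 \<in> {2.85 - 3.20 / 10^3 .. 2.85 + 3.20 / 10^3}"
      "b2 \<in> {0.309 - 2.78 / 10^4 .. 0.309 + 2.78 / 10^4}"
    and h_bound: "\<forall>z\<in>ball (complex_of_real rho) (1/8).
       norm (h0 z) \<le> b0 \<and> norm (h1 z) \<le> b1 \<and> norm (h2 z) \<le> b2"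
  shows "\<forall>(\<phi>::real) (n::nat). 0 < \<phi> \<and> \<phi> < pi \<and> 5 \<le> n \<longrightarrow>
     (\<forall>\<gamma>\<in>{part_circlepath (complex_of_real rho) (rho / real n) \<phi> (2 * pi - \<phi>),
            part_circlepath (complex_of_real rho) (rho / real n) (2 * pi - \<phi>) \<phi>}.
        (\<lambda>z. g z / z ^ (n + 1)) contour_integrable_on \<gamma> \<and>
        norm (contour_integral \<gamma> (\<lambda>z. g z / z ^ (n + 1)) / (2 * complex_of_real pi * \<i>))
          \<le> inverse (rho ^ n) * (real n)^2 * (4 / rho ^ 3) * Bpoly b0 b1 b2 (pi + ln (real n)))"
proof (intro allI impI ballI)
  fix \<phi> :: real and n :: nat and \<gamma>
  assume "0 < \<phi> \<and> \<phi> < pi \<and> 5 \<le> n"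
    and \<gamma>: "\<gamma> \<in> {part_circlepath (complex_of_real rho) (rho / real n) \<phi> (2 * pi - \<phi>),
            part_circlepath (complex_of_real rho) (rho / real n) (2 * pi - \<phi>) \<phi>}"
  then have \<phi>: "0 < \<phi>" "\<phi> < pi" and n: "5 \<le> n"
    by auto
  let ?F = "\<lambda>z. g z / z ^ (n + 1)"
  define arc where "arc = path_image (part_circlepath (complex_of_real rho) (rho / real n) \<phi> (2 * pi - \<phi>))"
  define M where "M = 4 * real n ^ 3 / rho ^ (n + 4) * Bpoly b0 b1 b2 (pi + ln (real n))"
  have arc: "arc \<subseteq> (Delta - {0}) \<inter> ball (complex_of_real rho) rho \<inter> ball (complex_of_real rho) (1/8)
      \<inter> sphere (complex_of_real rho) (rho / real n)"
    unfolding arc_def using \<phi> n by (rule path_image_small_arc_subset)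
  have "g holomorphic_on Delta"
    using holomorphic_on_diff[OF f_holo singular_part_holomorphic_on_Delta]
    by (rule holomorphic_transform) (simp add: g_def)
  then have cont: "continuous_on arc ?F"
    using arc by (intro continuous_intros continuous_on_subset[OF holomorphic_on_imp_continuous_on]) auto
  have "norm (?F z) \<le> M" if "z \<in> arc" for z
  proof -
    have z: "z \<in> Delta \<inter> ball (complex_of_real rho) rho" "z \<in> ball (complex_of_real rho) (1/8)"
      "norm (z - complex_of_real rho) = rho / real n"
      using that arc by (auto simp: dist_norm norm_minus_commute)
    then have gz: "g z = (h0 z + h1 z * Lfun z + h2 z * Lfun z ^ 2) / (z - complex_of_real rho) ^ 3"
      using decomp g_def by simp
    show ?thesis
      unfolding gz M_def using h_bound z(2) by (intro norm_Lfun_quadratic_quotient_le[OF n z(3)]) auto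
  qed
  then have "?F contour_integrable_on \<gamma>
      \<and> norm (contour_integral \<gamma> ?F / (2 * complex_of_real pi * \<i>)) \<le> M * (rho / real n)"
    using \<gamma> \<phi> rho_bounds(1) n unfolding arc_def
    by (intro norm_contour_integral_part_circlepath_le[OF cont[unfolded arc_def]]) auto
  moreover have "M * (rho / real n)
      = inverse (rho ^ n) * (real n)\<^sup>2 * (4 / rho ^ 3) * Bpoly b0 b1 b2 (pi + ln (real n))"
    using rho_bounds(1) n by (simp add: M_def field_simps power_add eval_nat_numeral)
  ultimately show "?F contour_integrable_on \<gamma>
      \<and> norm (contour_integral \<gamma> ?F / (2 * complex_of_real pi * \<i>))
        \<le> inverse (rho ^ n) * (real n)\<^sup>2 * (4 / rho ^ 3) * Bpoly b0 b1 b2 (pi + ln (real n))"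
    by simp
qed

end
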